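(* Let $D,D'\in\mathcal{D}_1$ be persistence measures. Then \[ \|\beta_k(D)-\beta_k(D')\|_{L^1(\mathbb{R})}\le 2\,d_1(D,D'). \]
   Context: $\overline{\mathcal{X}}=\{(x,y)\in\mathbb{R}^2:y\le x\}$, $\mathcal{X}=\{y<x\}$, $\Delta$ the diagonal. $\mathbb{R}^2$ carries the metric $d_\infty((x,y),(x',y'))=\max\{|x-x'|,|y-y'|\}$, and $d_\infty((x,y),\Delta)=\frac12|y-x|$. $\mathcal{D}_1$ is the set of Radon measures $\mu$ on $\overline{\mathcal{X}}$ with $\int d_\infty(z,\Delta)\,d\mu(z)<\infty$. $d_1(\mu,\nu)=\inf_\pi\int_{\overline{\mathcal{X}}^2}d_\infty(z,w)\,d\pi(z,w)$ over Radon measures $\pi$ on $\overline{\mathcal{X}}^2$ with $\pi(A\times\overline{\mathcal{X}})=\mu(A)$ and $\pi(\overline{\mathcal{X}}\times B)=\nu(B)$ for all Borel $A,B\subset\mathcal{X}$. For $x\in\mathbb{R}$, $R_x=[x,\infty[\times]-\infty,x]$, and for a persistence measure $D$, $\beta_k(D)(x)=D(R_x)$ (the index $k$ refers to the homological degree the diagram comes from). *)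

theory Defs
  imports "HOL-Analysis.Analysis"
begin

type_synonym pt = "real \<times> real"

definition Xbar :: "pt set" where
  "Xbar = {(x, y). y \<le> x}"

definition Xopen :: "pt set" where
  "Xopen = {(x, y). y < x}"

definition dinf :: "pt \<Rightarrow> pt \<Rightarrow> real" where
  "dinf z w = max \<bar>fst z - fst w\<bar> \<bar>snd z - snd w\<bar>"

definition dinf_diag :: "pt \<Rightarrow> real" where
  "dinf_diag z = \<bar>snd z - fst z\<bar> / 2"

text \<open>Radon (= locally finite Borel) measure on the closed half-plane Xbar,
  represented as a Borel measure on the plane carried by Xbar.\<close>
definition radon_on_Xbar :: "pt measure \<Rightarrow> bool" where
  "radon_on_Xbar M \<longleftrightarrow> sets M = sets borel \<and> emeasure M (- Xbar) = 0 \<and>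
     (\<forall>K. compact K \<and> K \<subseteq> Xbar \<longrightarrow> emeasure M K < \<infinity>)"

definition D1 :: "pt measure set" where
  "D1 = {M. radon_on_Xbar M \<and> (\<integral>\<^sup>+ z. ennreal (dinf_diag z) \<partial>M) < \<infinity>}"

definition radon_on_Xbar2 :: "(pt \<times> pt) measure \<Rightarrow> bool" where
  "radon_on_Xbar2 P \<longleftrightarrow> sets P = sets borel \<and> emeasure P (- (Xbar \<times> Xbar)) = 0 \<and>
     (\<forall>K. compact K \<and> K \<subseteq> Xbar \<times> Xbar \<longrightarrow> emeasure P K < \<infinity>)"

definition admissible_plan :: "pt measure \<Rightarrow> pt measure \<Rightarrow> (pt \<times> pt) measure \<Rightarrow> bool" where
  "admissible_plan \<mu> \<nu> P \<longleftrightarrow> radon_on_Xbar2 P \<and>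
     (\<forall>A \<in> sets borel. A \<subseteq> Xopen \<longrightarrow> emeasure P (A \<times> Xbar) = emeasure \<mu> A) \<and>
     (\<forall>B \<in> sets borel. B \<subseteq> Xopen \<longrightarrow> emeasure P (Xbar \<times> B) = emeasure \<nu> B)"

definition d1 :: "pt measure \<Rightarrow> pt measure \<Rightarrow> ennreal" where
  "d1 \<mu> \<nu> = (INF P \<in> {P. admissible_plan \<mu> \<nu> P}.
              \<integral>\<^sup>+ zw. ennreal (dinf (fst zw) (snd zw)) \<partial>P)"

definition Rx :: "real \<Rightarrow> pt set" where
  "Rx x = {x..} \<times> {..x}"

text \<open>Persistent Betti curve; D(R_x) is finite for D in D1.\<close>
definition beta :: "pt measure \<Rightarrow> real \<Rightarrow> real" where
  "beta D x = enn2real (emeasure D (Rx x))"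

end

theory Submission
  imports Defs
begin

(* Fix an admissible plan P between D and D' and put S x = Rx x \<inter> Xopen. Away from the
  countably many x at which D or D' charges the diagonal point (x, x), beta D x and beta D' x
  are the P-masses of S x \<times> Xbar and Xbar \<times> S x, so their difference is at most the P-mass
  of the pairs (z, w) of which exactly one lies in S x. Integrating in x and exchanging the
  order of integration, the inner integral becomes the length of the symmetric difference
  of the bars [snd z, fst z] and [snd w, fst w], which is at most
  \<bar>fst z - fst w\<bar> + \<bar>snd z - snd w\<bar> \<le> 2 dinf z w. *)

lemma borel_measurable_fst [measurable]:
  "fst \<in> borel_measurable (borel :: ('a::second_countable_topology \<times> 'b::second_countable_topology) measure)"
  by (intro borel_measurable_continuous_onI continuous_on_fst continuous_on_id)

lemma borel_measurable_snd [measurable]: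
  "snd \<in> borel_measurable (borel :: ('a::second_countable_topology \<times> 'b::second_countable_topology) measure)"
  by (intro borel_measurable_continuous_onI continuous_on_snd continuous_on_id)

lemma ennreal_le_mult_INF:
  fixes x c :: ennreal
  assumes "c \<noteq> 0" "c \<noteq> \<infinity>" and "\<And>i. i \<in> I \<Longrightarrow> x \<le> c * f i"
  shows "x \<le> c * (INF i\<in>I. f i)"
proof -
  have "x / c \<le> (INF i\<in>I. f i)"
    using assms by (intro INF_greatest divide_le_posI_ennreal) (auto simp: zero_less_iff_neq_zero)
  then have "c * (x / c) \<le> c * (INF i\<in>I. f i)"
    by (rule mult_left_mono) simp
  moreover have "c * (x / c) = x"
    using assms by (simp add: ennreal_times_divide mult.commute[of c] ennreal_mult_divide_eq)
  ultimately show ?thesis by simp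
qed

lemma abs_measure_diff_le_emeasure_sym_diff:
  assumes "A \<in> sets M" "B \<in> sets M" "emeasure M A < \<infinity>" "emeasure M B < \<infinity>"
  shows "ennreal \<bar>measure M A - measure M B\<bar> \<le> emeasure M (sym_diff A B)"
proof -
  have fA: "A \<in> fmeasurable M" and fB: "B \<in> fmeasurable M"
    using assms by (auto intro: fmeasurableI)
  have le: "measure M X \<le> measure M Y + measure M (sym_diff A B)"
    if "X \<in> fmeasurable M" "Y \<in> fmeasurable M" "X - Y \<subseteq> sym_diff A B" for X Y
  proof -
    have "measure M X \<le> measure M (Y \<union> sym_diff A B)"
      using that fA fB by (intro measure_mono_fmeasurable) auto
    also have "\<dots> \<le> measure M Y + measure M (sym_diff A B)"
      using that fA fB by (intro measure_Un_le) auto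
    finally show ?thesis .
  qed
  have "\<bar>measure M A - measure M B\<bar> \<le> measure M (sym_diff A B)"
    using le[OF fA fB] le[OF fB fA] by auto
  then have "ennreal \<bar>measure M A - measure M B\<bar> \<le> ennreal (measure M (sym_diff A B))"
    by (rule ennreal_leI)
  also have "\<dots> = emeasure M (sym_diff A B)"
    using fA fB by (intro emeasure_eq_measure2[symmetric]) auto
  finally show ?thesis .
qed

lemma emeasure_compact_less_top_if_null_outside:
  fixes M :: "'a::t2_space measure"
  assumes sets: "sets M = sets borel" and "closed C" and null: "emeasure M (- C) = 0"
    and fin: "\<And>K. compact K \<Longrightarrow> K \<subseteq> C \<Longrightarrow> emeasure M K < \<infinity>" and "compact K"
  shows "emeasure M K < \<infinity>"
proof -
  have K: "K \<in> sets M" and C: "C \<in> sets M" and "- C \<in> sets M"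
    using sets \<open>closed C\<close> \<open>compact K\<close> by (simp_all add: borel_closed compact_imp_closed)
  have "emeasure M K \<le> emeasure M (K \<inter> C) + emeasure M (K - C)"
    using K C by (metis Int_Diff_Un emeasure_subadditive sets.Diff sets.Int order_refl)
  also have "emeasure M (K - C) \<le> emeasure M (- C)"
    using \<open>- C \<in> sets M\<close> by (intro emeasure_mono) auto
  finally have "emeasure M K \<le> emeasure M (K \<inter> C)"
    using null by simp
  also have "\<dots> < \<infinity>"
    using fin \<open>closed C\<close> \<open>compact K\<close> by (simp add: compact_Int_closed)
  finally show ?thesis .
qed

lemma sigma_finite_if_compact_finite:
  fixes M :: "'a::{heine_borel, real_normed_vector} measure"
  assumes sets: "sets M = sets borel" and fin: "\<And>K. compact K \<Longrightarrow> emeasure M K < \<infinity>"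
  shows "sigma_finite_measure M"
proof
  let ?A = "range (\<lambda>n::nat. cball (0::'a) (real n))"
  have "x \<in> \<Union>?A" for x
    using real_arch_simple[of "norm x"] by auto
  moreover have "space M = UNIV"
    using sets by (metis sets_eq_imp_space_eq space_borel)
  moreover have "?A \<subseteq> sets M" "\<forall>a\<in>?A. emeasure M a \<noteq> \<infinity>"
    using sets fin[OF compact_cball] by (auto simp: less_top)
  ultimately show "\<exists>A. countable A \<and> A \<subseteq> sets M \<and> \<Union>A = space M \<and> (\<forall>a\<in>A. emeasure M a \<noteq> \<infinity>)"
    by (intro exI[of _ ?A]) auto
qed

lemma (in sigma_finite_measure) countable_atoms: "countable {x. emeasure M {x} \<noteq> 0}"
proof -
  obtain A :: "nat \<Rightarrow> 'a set" where A: "range A \<subseteq> sets M" "\<Union>(range A) = space M"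
    and fin: "\<And>i. emeasure M (A i) \<noteq> \<infinity>"
    using sigma_finite by blast
  have finite_restrict: "finite_measure (restrict_space M (A i))" for i
    using A fin by (intro finite_measureI) (auto simp: space_restrict_space emeasure_restrict_space)
  have "{x. emeasure M {x} \<noteq> 0} \<subseteq> (\<Union>i. {x. measure (restrict_space M (A i)) {x} \<noteq> 0})"
  proof safe
    fix x assume x: "emeasure M {x} \<noteq> 0"
    then have "{x} \<in> sets M"
      using emeasure_notin_sets by blast
    then obtain i where "x \<in> A i"
      using A sets.sets_into_space by blast
    then have "emeasure (restrict_space M (A i)) {x} = emeasure M {x}"
      using A by (intro emeasure_restrict_space) auto
    then have "measure (restrict_space M (A i)) {x} \<noteq> 0"
      using x finite_measure.emeasure_finite[OF finite_restrict, of i "{x}"]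
      by (simp add: measure_def enn2real_eq_0_iff)
    then show "x \<in> (\<Union>i. {x. measure (restrict_space M (A i)) {x} \<noteq> 0})"
      by blast
  qed
  moreover have "countable (\<Union>i. {x. measure (restrict_space M (A i)) {x} \<noteq> 0})"
    using finite_measure.countable_support[OF finite_restrict] by auto
  ultimately show ?thesis
    by (rule countable_subset)
qed

lemma sym_diff_Icc_subset:
  fixes a b a' b' :: "'a::linorder"
  shows "sym_diff {b..a} {b'..a'} \<subseteq> {min b b'..max b b'} \<union> {min a a'..max a a'}"
  by auto

lemma emeasure_sym_diff_Icc_le:
  fixes a b a' b' :: real
  shows "emeasure lborel (sym_diff {b..a} {b'..a'}) \<le> ennreal (\<bar>b - b'\<bar> + \<bar>a - a'\<bar>)"
proof -
  have "emeasure lborel (sym_diff {b..a} {b'..a'})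
      \<le> emeasure lborel ({min b b'..max b b'} \<union> {min a a'..max a a'})"
    by (intro emeasure_mono sym_diff_Icc_subset) simp
  also have "\<dots> \<le> emeasure lborel {min b b'..max b b'} + emeasure lborel {min a a'..max a a'}"
    by (intro emeasure_subadditive) simp_all
  also have "\<dots> = ennreal (\<bar>b - b'\<bar> + \<bar>a - a'\<bar>)"
    by (simp add: ennreal_plus max_def min_def abs_real_def)
  finally show ?thesis .
qed

lemma closed_Xbar: "closed Xbar"
proof -
  have "closed {p :: pt. snd p \<le> fst p}"
    by (intro closed_Collect_le continuous_on_fst continuous_on_snd continuous_on_id)
  moreover have "Xbar = {p. snd p \<le> fst p}"
    by (auto simp: Xbar_def)
  ultimately show ?thesis
    by simp
qed

lemma open_Xopen: "open Xopen"
proof -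
  have "open {p :: pt. snd p < fst p}"
    by (intro open_Collect_less continuous_on_fst continuous_on_snd continuous_on_id)
  moreover have "Xopen = {p. snd p < fst p}"
    by (auto simp: Xopen_def)
  ultimately show ?thesis
    by simp
qed

lemma Xopen_subset_Xbar: "Xopen \<subseteq> Xbar"
  unfolding Xopen_def Xbar_def by auto

lemma closed_Rx: "closed (Rx x)"
  unfolding Rx_def by (intro closed_Times) auto

lemma sets_borel_Xbar [measurable]: "Xbar \<in> sets borel"
  using closed_Xbar by simp

lemma sets_borel_Xopen [measurable]: "Xopen \<in> sets borel"
  using open_Xopen by simp

lemma sets_borel_Rx [measurable]: "Rx x \<in> sets borel"
  using closed_Rx by simp

lemma radon_on_Xbar_compact_finite: "radon_on_Xbar M \<Longrightarrow> compact K \<Longrightarrow> emeasure M K < \<infinity>"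
  unfolding radon_on_Xbar_def using closed_Xbar
  by (blast intro: emeasure_compact_less_top_if_null_outside)

lemma radon_on_Xbar2_compact_finite: "radon_on_Xbar2 P \<Longrightarrow> compact K \<Longrightarrow> emeasure P K < \<infinity>"
  unfolding radon_on_Xbar2_def using closed_Times[OF closed_Xbar closed_Xbar]
  by (blast intro: emeasure_compact_less_top_if_null_outside)

lemma radon_on_Xbar2_sigma_finite: "radon_on_Xbar2 P \<Longrightarrow> sigma_finite_measure P"
  using radon_on_Xbar2_compact_finite
  by (intro sigma_finite_if_compact_finite) (auto simp: radon_on_Xbar2_def)

lemma D1_sets: "D \<in> D1 \<Longrightarrow> sets D = sets borel"
  unfolding D1_def radon_on_Xbar_def by auto

lemma D1_sigma_finite: "D \<in> D1 \<Longrightarrow> sigma_finite_measure D"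
  using radon_on_Xbar_compact_finite
  by (intro sigma_finite_if_compact_finite D1_sets) (auto simp: D1_def)

lemma D1_countable_diagonal_atoms:
  assumes "D \<in> D1"
  shows "countable {x. emeasure D {(x, x)} \<noteq> 0}"
proof -
  have "{x. emeasure D {(x, x)} \<noteq> 0} \<subseteq> fst ` {p. emeasure D {p} \<noteq> 0}"
    by force
  then show ?thesis
    using sigma_finite_measure.countable_atoms[OF D1_sigma_finite[OF assms]]
    by (blast intro: countable_subset countable_image)
qed

lemma D1_emeasure_Rx_finite:
  assumes "D \<in> D1"
  shows "emeasure D (Rx x) < \<infinity>"
proof -
  let ?B = "cbox (x, x - 2) (x + 2, x)" and ?F = "{z. 1 \<le> dinf_diag z}"
  have "closed ?F"
    unfolding dinf_diag_def by (intro closed_Collect_le continuous_intros) simp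
  then have F: "?F \<in> sets D" and B: "?B \<in> sets D"
    using D1_sets[OF assms] by simp_all
  have "z \<in> ?B \<union> ?F" if "z \<in> Rx x" for z
  proof (cases "fst z \<le> x + 2 \<and> x - 2 \<le> snd z")
    case True
    then show ?thesis
      using that by (cases z) (auto simp: Rx_def cbox_Pair_eq)
  next
    case False
    then show ?thesis
      using that by (cases z) (auto simp: Rx_def dinf_diag_def)
  qed
  then have "Rx x \<subseteq> ?B \<union> ?F"
    by blast
  then have "emeasure D (Rx x) \<le> emeasure D (?B \<union> ?F)"
    using B F by (intro emeasure_mono) auto
  also have "\<dots> \<le> emeasure D ?B + emeasure D ?F"
    using B F by (intro emeasure_subadditive) auto
  also have "emeasure D ?F \<le> (\<integral>\<^sup>+ z. ennreal (dinf_diag z) \<partial>D)"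
    using F by (auto simp: nn_integral_indicator[symmetric] indicator_def intro!: nn_integral_mono)
  also have "emeasure D ?B + (\<integral>\<^sup>+ z. ennreal (dinf_diag z) \<partial>D) < \<infinity>"
    using assms radon_on_Xbar_compact_finite[OF _ compact_cbox] by (auto simp: D1_def less_top)
  finally show ?thesis
    by (simp add: add_left_mono)
qed

lemma D1_emeasure_Rx_eq_Xopen:
  assumes "D \<in> D1" and "emeasure D {(x, x)} = 0"
  shows "emeasure D (Rx x) = emeasure D (Rx x \<inter> Xopen)"
proof -
  have sets: "sets D = sets borel"
    using D1_sets[OF assms(1)] .
  have "- Xbar \<in> sets D"
    using sets closed_Xbar by (simp add: borel_open)
  then have "- Xbar \<in> null_sets D"
    using assms(1) by (simp add: D1_def radon_on_Xbar_def null_sets_def)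
  moreover have "{(x, x)} \<in> null_sets D"
    using assms(2) sets by (simp add: null_sets_def)
  ultimately have "- Xbar \<union> {(x, x)} \<in> null_sets D"
    by (rule null_sets.Un)
  moreover have "Rx x - Xopen \<subseteq> - Xbar \<union> {(x, x)}"
    by (auto simp: Rx_def Xopen_def Xbar_def)
  moreover have "Rx x - Xopen \<in> sets D" and RX: "Rx x \<inter> Xopen \<in> sets D"
    using sets by simp_all
  ultimately have "Rx x - Xopen \<in> null_sets D"
    by (blast intro: null_sets_subset)
  with RX have "emeasure D ((Rx x \<inter> Xopen) \<union> (Rx x - Xopen)) = emeasure D (Rx x \<inter> Xopen)"
    by (rule emeasure_Un_null_set)
  then show ?thesis
    by (simp add: Int_Diff_Un)
qed

definition bar :: "pt \<Rightarrow> real set" where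
  "bar z = {x. z \<in> Rx x \<inter> Xopen}"

lemma mem_bar_iff: "x \<in> bar z \<longleftrightarrow> snd z \<le> x \<and> x \<le> fst z \<and> snd z < fst z"
  by (cases z) (auto simp: bar_def Rx_def Xopen_def)

lemma emeasure_sym_diff_bar_le: "emeasure lborel (sym_diff (bar z) (bar w)) \<le> 2 * ennreal (dinf z w)"
proof -
  let ?I = "\<lambda>z. {snd z..fst z}"
  have "bar z \<subseteq> ?I z" "?I z \<subseteq> insert (fst z) (bar z)" for z
    by (auto simp: mem_bar_iff)
  then have "sym_diff (bar z) (bar w) \<subseteq> sym_diff (?I z) (?I w) \<union> {fst z, fst w}"
    by blast
  moreover have null: "{fst z, fst w} \<in> null_sets lborel"
    by (intro finite_imp_null_set_lborel) simp
  ultimately have "emeasure lborel (sym_diff (bar z) (bar w))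
      \<le> emeasure lborel (sym_diff (?I z) (?I w) \<union> {fst z, fst w})"
    by (intro emeasure_mono) (simp_all add: null_setsD2[OF null])
  also have "\<dots> = emeasure lborel (sym_diff (?I z) (?I w))"
    using null by (intro emeasure_Un_null_set) simp_all
  also have "\<dots> \<le> ennreal (\<bar>snd z - snd w\<bar> + \<bar>fst z - fst w\<bar>)"
    by (rule emeasure_sym_diff_Icc_le)
  also have "\<dots> \<le> ennreal (2 * dinf z w)"
    by (intro ennreal_leI) (simp add: dinf_def max_def)
  also have "\<dots> = 2 * ennreal (dinf z w)"
    by (simp add: ennreal_mult dinf_def)
  finally show ?thesis .
qed

lemma sets_borel_bar_sym_diff: "{(x, z, w). (x \<in> bar z) \<noteq> (x \<in> bar w)} \<in> sets borel"
  unfolding mem_bar_iff case_prod_beta by measurable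

lemma sets_borel_bar_sym_diff_at: "{(z, w). (x \<in> bar z) \<noteq> (x \<in> bar w)} \<in> sets borel"
  unfolding mem_bar_iff case_prod_beta by measurable

lemma beta_diff_le_emeasure_plan:
  assumes D: "D \<in> D1" and D': "D' \<in> D1" and P: "admissible_plan D D' P"
    and atoms: "emeasure D {(x, x)} = 0" "emeasure D' {(x, x)} = 0"
  shows "ennreal \<bar>beta D x - beta D' x\<bar> \<le> emeasure P {(z, w). (x \<in> bar z) \<noteq> (x \<in> bar w)}"
proof -
  define S where "S = Rx x \<inter> Xopen"
  have S: "S \<in> sets borel" "S \<subseteq> Xopen"
    unfolding S_def by simp_all
  have sets_P: "sets P = sets borel"
    using P by (simp add: admissible_plan_def radon_on_Xbar2_def)
  then have meas: "S \<times> Xbar \<in> sets P" "Xbar \<times> S \<in> sets P"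
    using S by (simp_all add: borel_Times)
  have "emeasure P (S \<times> Xbar) = emeasure D S" "emeasure P (Xbar \<times> S) = emeasure D' S"
    using P S by (simp_all add: admissible_plan_def)
  then have PS: "emeasure P (S \<times> Xbar) = emeasure D (Rx x)" "emeasure P (Xbar \<times> S) = emeasure D' (Rx x)"
    using D1_emeasure_Rx_eq_Xopen[OF D atoms(1)] D1_emeasure_Rx_eq_Xopen[OF D' atoms(2)]
    by (simp_all add: S_def)
  have "ennreal \<bar>beta D x - beta D' x\<bar> = ennreal \<bar>measure P (S \<times> Xbar) - measure P (Xbar \<times> S)\<bar>"
    by (simp add: beta_def measure_def PS)
  also have "\<dots> \<le> emeasure P (sym_diff (S \<times> Xbar) (Xbar \<times> S))"
    using meas PS D1_emeasure_Rx_finite[OF D] D1_emeasure_Rx_finite[OF D']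
    by (intro abs_measure_diff_le_emeasure_sym_diff) simp_all
  also have "\<dots> \<le> emeasure P {(z, w). (x \<in> bar z) \<noteq> (x \<in> bar w)}"
  proof (rule emeasure_mono)
    show "sym_diff (S \<times> Xbar) (Xbar \<times> S) \<subseteq> {(z, w). (x \<in> bar z) \<noteq> (x \<in> bar w)}"
      using S Xopen_subset_Xbar by (auto simp: bar_def S_def)
    show "{(z, w). (x \<in> bar z) \<noteq> (x \<in> bar w)} \<in> sets P"
      using sets_P sets_borel_bar_sym_diff_at by simp
  qed
  finally show ?thesis .
qed

(* Plans only control the marginals on Xopen, whereas Rx x also contains the diagonal point
  (x, x); this is why the bound holds only away from the atoms on the diagonal. *)
lemma AE_beta_diff_le_emeasure_plan:
  assumes D: "D \<in> D1" and D': "D' \<in> D1" and P: "admissible_plan D D' P"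
  shows "AE x in lborel.
    ennreal \<bar>beta D x - beta D' x\<bar> \<le> emeasure P {(z, w). (x \<in> bar z) \<noteq> (x \<in> bar w)}"
proof -
  have "countable ({x. emeasure D {(x, x)} \<noteq> 0} \<union> {x. emeasure D' {(x, x)} \<noteq> 0})"
    using D1_countable_diagonal_atoms[OF D] D1_countable_diagonal_atoms[OF D'] by simp
  then have "AE x in lborel. x \<notin> {x. emeasure D {(x, x)} \<noteq> 0} \<union> {x. emeasure D' {(x, x)} \<noteq> 0}"
    by (intro AE_not_in countable_imp_null_set_lborel)
  then show ?thesis
    by eventually_elim (blast intro: beta_diff_le_emeasure_plan[OF D D' P])
qed

lemma nn_integral_beta_diff_le_plan_cost:
  assumes D: "D \<in> D1" and D': "D' \<in> D1" and P: "admissible_plan D D' P"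
  shows "(\<integral>\<^sup>+ x. ennreal \<bar>beta D x - beta D' x\<bar> \<partial>lborel)
    \<le> 2 * (\<integral>\<^sup>+ zw. ennreal (dinf (fst zw) (snd zw)) \<partial>P)"
proof -
  let ?E = "{(x, z, w). (x \<in> bar z) \<noteq> (x \<in> bar w)}"
  have sets_P: "sets P = sets borel"
    using P by (simp add: admissible_plan_def radon_on_Xbar2_def)
  interpret pair_sigma_finite lborel P
    using P lborel.sigma_finite_measure_axioms
    by (simp add: pair_sigma_finite_def admissible_plan_def radon_on_Xbar2_sigma_finite)
  have "sets (lborel \<Otimes>\<^sub>M P) = sets (borel :: (real \<times> pt \<times> pt) measure)"
    using sets_P by (metis borel_prod sets_lborel sets_pair_measure_cong)
  then have E: "?E \<in> sets (lborel \<Otimes>\<^sub>M P)"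
    using sets_borel_bar_sym_diff by simp
  have "Pair x -` ?E = {(z, w). (x \<in> bar z) \<noteq> (x \<in> bar w)}" for x
    by auto
  then have "AE x in lborel. ennreal \<bar>beta D x - beta D' x\<bar> \<le> emeasure P (Pair x -` ?E)"
    using AE_beta_diff_le_emeasure_plan[OF D D' P] by simp
  then have "(\<integral>\<^sup>+ x. ennreal \<bar>beta D x - beta D' x\<bar> \<partial>lborel) \<le> (\<integral>\<^sup>+ x. emeasure P (Pair x -` ?E) \<partial>lborel)"
    by (rule nn_integral_mono_AE)
  also have "\<dots> = emeasure (lborel \<Otimes>\<^sub>M P) ?E"
    using E by (rule M2.emeasure_pair_measure_alt[symmetric])
  also have "\<dots> = (\<integral>\<^sup>+ zw. emeasure lborel ((\<lambda>x. (x, zw)) -` ?E) \<partial>P)"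
    using E by (rule emeasure_pair_measure_alt2)
  also have "\<dots> \<le> (\<integral>\<^sup>+ zw. 2 * ennreal (dinf (fst zw) (snd zw)) \<partial>P)"
  proof (intro nn_integral_mono)
    fix zw :: "pt \<times> pt"
    have "(\<lambda>x. (x, zw)) -` ?E = sym_diff (bar (fst zw)) (bar (snd zw))"
      by (cases zw) auto
    then show "emeasure lborel ((\<lambda>x. (x, zw)) -` ?E) \<le> 2 * ennreal (dinf (fst zw) (snd zw))"
      using emeasure_sym_diff_bar_le by simp
  qed
  also have "\<dots> = 2 * (\<integral>\<^sup>+ zw. ennreal (dinf (fst zw) (snd zw)) \<partial>P)"
  proof (rule nn_integral_cmult)
    have "(\<lambda>zw. ennreal (dinf (fst zw) (snd zw))) \<in> borel_measurable borel"
      unfolding dinf_def by measurable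
    with measurable_cong_sets[OF sets_P refl]
    show "(\<lambda>zw. ennreal (dinf (fst zw) (snd zw))) \<in> borel_measurable P"
      by blast
  qed
  finally show ?thesis .
qed

theorem mainTheorem7:
  assumes "D \<in> D1" and "D' \<in> D1"
  shows "(\<integral>\<^sup>+ x. ennreal \<bar>beta D x - beta D' x\<bar> \<partial>lborel) \<le> 2 * d1 D D'"
  unfolding d1_def
  using nn_integral_beta_diff_le_plan_cost[OF assms] by (intro ennreal_le_mult_INF) auto

end
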